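(* Let $a=\{a_k\}_{k=0}^\infty$ be a real sequence with $a_0>0$, $a_k\geq0$ for all $k$, $\lim_{k\to\infty}a_k=0$ and $\sum_{k=0}^\infty a_k=\infty$. Define $\{b_k\}_{k=0}^\infty$ by $b_0=1/a_0$ and $b_k=-\frac{1}{a_0}\sum_{j=0}^{k-1}a_{k-j}b_j$ for $k\geq1$, and let $u=\{u_k\}_{k=0}^\infty$ with $u_k=\sum_{j=0}^k b_j$. If $a$ has decay rate $\alpha\in[0,1]$ and $u$ has decay rate $\upsilon$, then $\upsilon\leq 1-\alpha$.
   Context: For $p\geq1$, $l^p$ denotes the space of real sequences $x=\{x_k\}_{k\ge0}$ with $\|x\|_p^p=\sum_{k=0}^\infty|x_k|^p<\infty$. For a sequence $x$ with $x_k\to0$, its decay rate is the number $1/p\in[0,1]$, where $p\geq1$ is such that $x\notin l^p$ but $x\in l^q$ for every $q>p$. The sequence $\{b_k\}$ gives the entries of the inverse of the half-infinite lower triangular Toeplitz matrix $A$ with entries $A_{ij}=a_{i-j}$ ($i\ge j$), and $u$ is called the fundamental matrix of $a$. *)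

theory Defs
  imports Complex_Main
begin

definition in_lp :: "real \<Rightarrow> (nat \<Rightarrow> real) \<Rightarrow> bool" where
  "in_lp p x \<longleftrightarrow> summable (\<lambda>k. \<bar>x k\<bar> powr p)"

text \<open>Decay rate 1/p of a null sequence x: x is not in l^p but in l^q for all q > p.
  The value 0 corresponds to p = infinity, read as: x is in no l^q with finite q \<ge> 1.\<close>
definition has_decay_rate :: "(nat \<Rightarrow> real) \<Rightarrow> real \<Rightarrow> bool" where
  "has_decay_rate x r \<longleftrightarrow> x \<longlonglongrightarrow> 0 \<and> 0 \<le> r \<and> r \<le> 1 \<and>
     (if r = 0 then (\<forall>q\<ge>1. \<not> in_lp q x)
      else (\<not> in_lp (1 / r) x \<and> (\<forall>q>1 / r. in_lp q x)))"

end

theory Submission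
  imports Defs "HOL-Analysis.Convex"
begin

text \<open>Since \<open>b\<close> is the convolution inverse of \<open>a\<close>, the convolution of \<open>a\<close> with the partial
  sums \<open>u\<close> of \<open>b\<close> is the constant sequence 1. If \<open>\<alpha> + \<upsilon> > 1\<close>, there are conjugate exponents
  \<open>r, s\<close> with \<open>a \<in> l\<^sup>r\<close> and \<open>u \<in> l\<^sup>s\<close>; by Young's inequality the convolution of an \<open>l\<^sup>r\<close> null
  sequence with an \<open>l\<^sup>s\<close> sequence tends to 0, a contradiction.\<close>

lemma Youngs_inequality_weighted:
  fixes p q r s t :: real
  assumes r: "r > 1" and s: "s > 1" and rs: "1/r + 1/s = 1"
    and t: "t > 0" and p: "p \<ge> 0" and q: "q \<ge> 0"
  shows "p * q \<le> t powr r * p powr r + t powr (-s) * q powr s"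
proof -
  have "p * q = (t*p) * (q/t)" using t by simp
  also have "\<dots> \<le> (t*p) powr r / r + (q/t) powr s / s"
    by (rule Youngs_inequality[OF r s rs]) (use t p q in auto)
  also have "\<dots> \<le> (t*p) powr r + (q/t) powr s"
    using r s by (intro add_mono) (simp_all add: divide_le_eq mult_le_cancel_left1)
  also have "\<dots> = t powr r * p powr r + t powr (-s) * q powr s"
    using t p q by (simp add: powr_mult powr_divide powr_minus_divide)
  finally show ?thesis .
qed

lemma convolution_tail_le:
  fixes x y :: "nat \<Rightarrow> real" and r s t :: real
  assumes r: "r > 1" and s: "s > 1" and rs: "1/r + 1/s = 1" and t: "t > 0"
    and sx: "summable (\<lambda>k. \<bar>x k\<bar> powr r)" and sy: "summable (\<lambda>k. \<bar>y k\<bar> powr s)"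
    and "N \<le> k"
  shows "(\<Sum>j\<in>{N..k}. \<bar>x (k-j)\<bar> * \<bar>y j\<bar>)
           \<le> t powr r * (\<Sum>i. \<bar>x i\<bar> powr r) + t powr (-s) * (\<Sum>i. \<bar>y (i+N)\<bar> powr s)"
proof -
  have x_part: "(\<Sum>j\<in>{N..k}. \<bar>x (k-j)\<bar> powr r) \<le> (\<Sum>i. \<bar>x i\<bar> powr r)"
  proof -
    have "(\<Sum>j\<in>{N..k}. \<bar>x (k-j)\<bar> powr r) = (\<Sum>i\<in>(\<lambda>j. k-j) ` {N..k}. \<bar>x i\<bar> powr r)"
      by (subst sum.reindex) (auto simp: inj_on_def)
    also have "\<dots> \<le> (\<Sum>i. \<bar>x i\<bar> powr r)" by (rule sum_le_suminf[OF sx]) auto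
    finally show ?thesis .
  qed
  have y_part: "(\<Sum>j\<in>{N..k}. \<bar>y j\<bar> powr s) \<le> (\<Sum>i. \<bar>y (i+N)\<bar> powr s)"
  proof -
    have "(\<Sum>j\<in>{N..k}. \<bar>y j\<bar> powr s) = (\<Sum>i\<in>{0..k-N}. \<bar>y (i+N)\<bar> powr s)"
      using sum.shift_bounds_cl_nat_ivl[of "\<lambda>j. \<bar>y j\<bar> powr s" 0 N "k-N"] \<open>N \<le> k\<close> by simp
    also have "\<dots> \<le> (\<Sum>i. \<bar>y (i+N)\<bar> powr s)"
      by (rule sum_le_suminf) (auto intro: summable_ignore_initial_segment[OF sy])
    finally show ?thesis .
  qed
  have "(\<Sum>j\<in>{N..k}. \<bar>x (k-j)\<bar> * \<bar>y j\<bar>)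
          \<le> (\<Sum>j\<in>{N..k}. t powr r * \<bar>x (k-j)\<bar> powr r + t powr (-s) * \<bar>y j\<bar> powr s)"
    by (rule sum_mono) (rule Youngs_inequality_weighted[OF r s rs t]; simp)
  also have "\<dots> = t powr r * (\<Sum>j\<in>{N..k}. \<bar>x (k-j)\<bar> powr r)
                   + t powr (-s) * (\<Sum>j\<in>{N..k}. \<bar>y j\<bar> powr s)"
    by (simp add: sum.distrib sum_distrib_left)
  also have "\<dots> \<le> t powr r * (\<Sum>i. \<bar>x i\<bar> powr r) + t powr (-s) * (\<Sum>i. \<bar>y (i+N)\<bar> powr s)"
    using x_part y_part by (intro add_mono mult_left_mono) auto
  finally show ?thesis .
qed

text \<open>The head \<open>j < N\<close> of the convolution vanishes because \<open>x\<close> does; the tail \<open>j \<ge> N\<close> is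
  small by Young's inequality, with weight \<open>t\<close> tuned to \<open>\<Sum> \<bar>x\<bar>\<^sup>r\<close> and \<open>N\<close> to the tail of \<open>\<Sum> \<bar>y\<bar>\<^sup>s\<close>.\<close>

lemma convolution_tendsto_zero:
  fixes x y :: "nat \<Rightarrow> real" and r s :: real
  assumes r: "r > 1" and s: "s > 1" and rs: "1/r + 1/s = 1"
    and sx: "summable (\<lambda>k. \<bar>x k\<bar> powr r)" and sy: "summable (\<lambda>k. \<bar>y k\<bar> powr s)"
    and x_lim: "x \<longlonglongrightarrow> 0"
  shows "(\<lambda>k. \<Sum>j\<le>k. x (k-j) * y j) \<longlonglongrightarrow> 0"
proof (rule LIMSEQ_I)
  fix \<epsilon> :: real
  assume \<epsilon>: "\<epsilon> > 0"
  define A where "A = (\<Sum>k. \<bar>x k\<bar> powr r)"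
  have A: "A \<ge> 0" unfolding A_def by (rule suminf_nonneg[OF sx]) simp
  define t where "t = (\<epsilon> / (3 * (A+1))) powr (1/r)"
  have t: "t > 0" using A \<epsilon> by (simp add: t_def)
  have "t powr r = \<epsilon> / (3 * (A+1))" using A \<epsilon> r by (simp add: t_def powr_powr)
  then have tA: "t powr r * A \<le> \<epsilon>/3" using A \<epsilon>
    by (simp add: field_simps) (use powr_ge_zero[of t r] in linarith)
  define C where "C = t powr (-s)"
  have C: "C > 0" using t by (simp add: C_def)
  obtain N where N: "\<forall>n\<ge>N. norm (\<Sum>i. \<bar>y (i+n)\<bar> powr s) < \<epsilon> / (3*C)"
    using suminf_exist_split[OF _ sy, of "\<epsilon> / (3*C)"] \<epsilon> C by auto
  have "(\<lambda>k. \<Sum>j<N. \<bar>x (k-j)\<bar> * \<bar>y j\<bar>) \<longlonglongrightarrow> 0"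
  proof (rule tendsto_null_sum)
    fix j
    have "(\<lambda>k. x (k - j)) \<longlonglongrightarrow> 0"
      by (rule filterlim_compose[OF x_lim filterlim_minus_const_nat_at_top])
    then show "(\<lambda>k. \<bar>x (k-j)\<bar> * \<bar>y j\<bar>) \<longlonglongrightarrow> 0"
      by (intro tendsto_mult_left_zero tendsto_rabs_zero)
  qed
  then obtain K where K: "\<And>k. k \<ge> K \<Longrightarrow> (\<Sum>j<N. \<bar>x (k-j)\<bar> * \<bar>y j\<bar>) < \<epsilon>/3"
    using order_tendstoD(2)[of _ 0 sequentially "\<epsilon>/3"] \<epsilon> by (auto simp: eventually_sequentially)
  show "\<exists>no. \<forall>k\<ge>no. norm ((\<Sum>j\<le>k. x (k-j) * y j) - 0) < \<epsilon>"
  proof (intro exI allI impI)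
    fix k
    assume k: "max K N \<le> k"
    have tail: "(\<Sum>j\<in>{N..k}. \<bar>x (k-j)\<bar> * \<bar>y j\<bar>) < \<epsilon>/3 + \<epsilon>/3"
    proof -
      have "(\<Sum>j\<in>{N..k}. \<bar>x (k-j)\<bar> * \<bar>y j\<bar>) \<le> t powr r * A + C * (\<Sum>i. \<bar>y (i+N)\<bar> powr s)"
        unfolding A_def C_def using k by (intro convolution_tail_le[OF r s rs t sx sy]) simp
      also have "\<dots> < \<epsilon>/3 + C * (\<epsilon> / (3*C))"
        using tA N C by (intro add_le_less_mono mult_strict_left_mono) auto
      finally show ?thesis using C by simp
    qed
    have split: "{..k} = {..<N} \<union> {N..k}" using k by auto
    have "\<bar>\<Sum>j\<le>k. x (k-j) * y j\<bar> \<le> (\<Sum>j\<le>k. \<bar>x (k-j)\<bar> * \<bar>y j\<bar>)"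
      using sum_abs[of "\<lambda>j. x (k-j) * y j" "{..k}"] by (simp add: abs_mult)
    also have "\<dots> = (\<Sum>j<N. \<bar>x (k-j)\<bar> * \<bar>y j\<bar>) + (\<Sum>j\<in>{N..k}. \<bar>x (k-j)\<bar> * \<bar>y j\<bar>)"
      unfolding split by (rule sum.union_disjoint) auto
    finally have "\<bar>\<Sum>j\<le>k. x (k-j) * y j\<bar>
                    \<le> (\<Sum>j<N. \<bar>x (k-j)\<bar> * \<bar>y j\<bar>) + (\<Sum>j\<in>{N..k}. \<bar>x (k-j)\<bar> * \<bar>y j\<bar>)" .
    then show "norm ((\<Sum>j\<le>k. x (k-j) * y j) - 0) < \<epsilon>"
      using K[of k] tail k by simp
  qed
qed

lemma convolution_partial_sums:
  fixes x y :: "nat \<Rightarrow> 'a::semiring_0"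
  shows "(\<Sum>j\<le>k. x (k-j) * (\<Sum>i\<le>j. y i)) = (\<Sum>m\<le>k. \<Sum>i\<le>m. x (m-i) * y i)"
proof -
  have "(\<Sum>j\<le>k. x (k-j) * (\<Sum>i\<le>j. y i)) = (\<Sum>(j,i)\<in>Sigma {..k} (\<lambda>j. {..j}). x (k-j) * y i)"
    by (simp add: sum_distrib_left sum.Sigma)
  also have "\<dots> = (\<Sum>(m,i)\<in>Sigma {..k} (\<lambda>m. {..m}). x (m-i) * y i)"
    by (rule sum.reindex_bij_witness[where i="\<lambda>(m,i). (k-m+i, i)" and j="\<lambda>(j,i). (k-j+i, i)"])
      auto
  also have "\<dots> = (\<Sum>m\<le>k. \<Sum>i\<le>m. x (m-i) * y i)"
    by (simp add: sum.Sigma)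
  finally show ?thesis .
qed

lemma convolution_recursive_inverse:
  fixes a b :: "nat \<Rightarrow> 'a::field"
  assumes a0: "a 0 \<noteq> 0" and b0: "b 0 = 1 / a 0"
    and bk: "\<And>k. k \<ge> 1 \<Longrightarrow> b k = - (1 / a 0) * (\<Sum>j<k. a (k - j) * b j)"
  shows "(\<Sum>i\<le>m. a (m-i) * b i) = (if m = 0 then 1 else 0)"
proof (cases "m = 0")
  case True
  then show ?thesis using a0 b0 by simp
next
  case False
  have "(\<Sum>i\<le>m. a (m-i) * b i) = (\<Sum>i<m. a (m-i) * b i) + a 0 * b m"
    by (simp flip: lessThan_Suc_atMost)
  also have "\<dots> = 0" using bk[of m] False a0 by simp
  finally show ?thesis using False by simp
qed

text \<open>Take \<open>1/r\<close> just below \<open>\<alpha>\<close>; then \<open>1/s = 1 - 1/r\<close> lies just above \<open>1 - \<alpha>\<close>, still below \<open>\<upsilon>\<close>.\<close>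

lemma decay_rates_conjugate_exponents:
  assumes x: "has_decay_rate x \<alpha>" and y: "has_decay_rate y \<upsilon>" and gt: "\<alpha> + \<upsilon> > 1"
  obtains r s where "r > 1" "s > 1" "1/r + 1/s = 1" "in_lp r x" "in_lp s y"
proof -
  from x y have \<alpha>: "\<alpha> \<le> 1" "\<alpha> > 0" and \<upsilon>: "\<upsilon> > 0"
    and lp_x: "\<And>q. q > 1/\<alpha> \<Longrightarrow> in_lp q x" and lp_y: "\<And>q. q > 1/\<upsilon> \<Longrightarrow> in_lp q y"
    using gt unfolding has_decay_rate_def by (auto split: if_splits)
  define d where "d = min \<alpha> (\<alpha> + \<upsilon> - 1) / 2"
  have d: "d > 0" "d < \<alpha>" "d < \<alpha> + \<upsilon> - 1" using \<alpha> gt by (auto simp: d_def)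
  define r where "r = 1 / (\<alpha> - d)"
  define s where "s = 1 / (1 - \<alpha> + d)"
  have "r > 1/\<alpha>" unfolding r_def using d \<alpha> by (intro divide_strict_left_mono) auto
  moreover have "s > 1/\<upsilon>" unfolding s_def using d \<alpha> \<upsilon> by (intro divide_strict_left_mono) auto
  moreover have "r > 1" "s > 1" using d \<alpha> by (simp_all add: r_def s_def field_simps)
  moreover have "1/r + 1/s = 1" by (simp add: r_def s_def)
  ultimately show ?thesis using that lp_x lp_y by blast
qed

theorem theorem3:
  fixes a b u :: "nat \<Rightarrow> real" and \<alpha> \<upsilon> :: real
  assumes a0: "a 0 > 0"
    and a_nonneg: "\<And>k. a k \<ge> 0"
    and a_lim: "a \<longlonglongrightarrow> 0"
    and a_div: "\<not> summable a"
    and b0: "b 0 = 1 / a 0"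
    and bk: "\<And>k. k \<ge> 1 \<Longrightarrow> b k = - (1 / a 0) * (\<Sum>j<k. a (k - j) * b j)"
    and u_def: "\<And>k. u k = (\<Sum>j\<le>k. b j)"
    and rate_a: "has_decay_rate a \<alpha>"
    and rate_u: "has_decay_rate u \<upsilon>"
  shows "\<upsilon> \<le> 1 - \<alpha>"
proof (rule ccontr)
  assume "\<not> \<upsilon> \<le> 1 - \<alpha>"
  then obtain r s where r: "r > 1" and s: "s > 1" and rs: "1/r + 1/s = 1"
    and "in_lp r a" "in_lp s u"
    using decay_rates_conjugate_exponents[OF rate_a rate_u] by auto
  then have "(\<lambda>k. \<Sum>j\<le>k. a (k-j) * u j) \<longlonglongrightarrow> 0"
    unfolding in_lp_def by (intro convolution_tendsto_zero[OF r s rs _ _ a_lim])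
  moreover have "(\<Sum>j\<le>k. a (k-j) * u j) = 1" for k
    using convolution_recursive_inverse[of a b] a0 b0 bk
    by (simp add: u_def convolution_partial_sums sum.delta)
  ultimately show False using LIMSEQ_unique by fastforce
qed

end
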